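(* Let $m\in\mathbb{N}$ and let $L,M,N$ be nonempty subsets of $[m]$. Let $D=(1+u^2)D_1+u^2\big(D_2+(u+u^2)D_3\big)\subseteq\mathcal{R}^m$ where $D_1\in\{\Delta_L,\Delta_L^c\}$, $D_2\in\{\Delta_M,\Delta_M^c\}$, $D_3\in\{\Delta_N,\Delta_N^c\}$. Then the binary linear code $\Phi(C_D)$ is self-orthogonal (with respect to the Euclidean inner product on $\mathbb{Z}_2^{3|D|}$).
   Context: $\mathcal{R}=\mathbb{Z}_2[u]/\langle u^3-u\rangle$; every $x\in\mathcal{R}^n$ is uniquely $x=r+us+u^2t$ with $r,s,t\in\mathbb{Z}_2^n$, and $\mathbb{Z}_2^n\subseteq\mathcal{R}^n$. The Gray map $\Phi:\mathcal{R}^n\to\mathbb{Z}_2^{3n}$ is $\Phi(r+us+u^2t)=(r+s,\,s+t,\,t)$. $[m]=\{1,\dots,m\}$; for $X\subseteq[m]$, $\Delta_X=\{v\in\mathbb{Z}_2^m:\mathrm{Supp}(v)\subseteq X\}$ and $\Delta_X^c=\mathbb{Z}_2^m\setminus\Delta_X$. For $D_1,D_2,D_3\subseteq\mathbb{Z}_2^m$, $(1+u^2)D_1+u^2(D_2+(u+u^2)D_3)=\{(1+u^2)t_1+u^2t_2+u^2(u+u^2)t_3:t_i\in D_i\}\subseteq\mathcal{R}^m$. Given $D=\{d_1,\dots,d_n\}\subseteq\mathcal{R}^m$ (in a fixed order), $C_D=\{(v\cdot d_1,\dots,v\cdot d_n):v\in\mathcal{R}^m\}$ with $v\cdot d=\sum_i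 v_id_i$, and $\Phi(C_D)=\{\Phi(c):c\in C_D\}\subseteq\mathbb{Z}_2^{3n}$. A binary code $C$ is self-orthogonal if $C\subseteq C^\perp$. *)

theory Defs
  imports Main "HOL-Library.Z2"
begin

text \<open>The ring R = Z_2[u]/(u^3 - u). An element r + u s + u^2 t is represented
  by the triple (r, s, t) of elements of Z_2 (type bit).\<close>

type_synonym rr = "bit \<times> bit \<times> bit"

definition r_of :: "rr \<Rightarrow> bit" where "r_of x = fst x"
definition s_of :: "rr \<Rightarrow> bit" where "s_of x = fst (snd x)"
definition t_of :: "rr \<Rightarrow> bit" where "t_of x = snd (snd x)"

definition radd :: "rr \<Rightarrow> rr \<Rightarrow> rr" where
  "radd x y = (r_of x + r_of y, s_of x + s_of y, t_of x + t_of y)"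

text \<open>Multiplication using u^3 = u (hence u^4 = u^2).\<close>
definition rmul :: "rr \<Rightarrow> rr \<Rightarrow> rr" where
  "rmul x y =
    (r_of x * r_of y,
     r_of x * s_of y + s_of x * r_of y + s_of x * t_of y + t_of x * s_of y,
     r_of x * t_of y + t_of x * r_of y + s_of x * s_of y + t_of x * t_of y)"

definition r_one :: rr where "r_one = (1, 0, 0)"
definition r_u :: rr where "r_u = (0, 1, 0)"
definition r_u2 :: rr where "r_u2 = (0, 0, 1)"

text \<open>Vectors of length m are functions on nat, indexed by [m] = {1..m}, vanishing
  outside [m].\<close>

definition bvecs :: "nat \<Rightarrow> (nat \<Rightarrow> bit) set" where
  "bvecs m = {v. \<forall>i. i \<notin> {1..m} \<longrightarrow> v i = 0}"

definition rvecs :: "nat \<Rightarrow> (nat \<Rightarrow> rr) set" where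
  "rvecs m = {v. \<forall>i. i \<notin> {1..m} \<longrightarrow> v i = (0, 0, 0)}"

definition embed :: "(nat \<Rightarrow> bit) \<Rightarrow> (nat \<Rightarrow> rr)" where
  "embed v = (\<lambda>i. (v i, 0, 0))"

definition rvadd :: "(nat \<Rightarrow> rr) \<Rightarrow> (nat \<Rightarrow> rr) \<Rightarrow> (nat \<Rightarrow> rr)" where
  "rvadd v w = (\<lambda>i. radd (v i) (w i))"

definition rsmul :: "rr \<Rightarrow> (nat \<Rightarrow> rr) \<Rightarrow> (nat \<Rightarrow> rr)" where
  "rsmul a v = (\<lambda>i. rmul a (v i))"

definition supp :: "(nat \<Rightarrow> bit) \<Rightarrow> nat set" where
  "supp v = {i. v i \<noteq> 0}"

definition Delta :: "nat \<Rightarrow> nat set \<Rightarrow> (nat \<Rightarrow> bit) set" where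
  "Delta m X = {v \<in> bvecs m. supp v \<subseteq> X}"

definition Delta_c :: "nat \<Rightarrow> nat set \<Rightarrow> (nat \<Rightarrow> bit) set" where
  "Delta_c m X = bvecs m - Delta m X"

definition defset ::
  "(nat \<Rightarrow> bit) set \<Rightarrow> (nat \<Rightarrow> bit) set \<Rightarrow> (nat \<Rightarrow> bit) set \<Rightarrow> (nat \<Rightarrow> rr) set" where
  "defset D1 D2 D3 =
    {rvadd (rvadd (rsmul (radd r_one r_u2) (embed t1)) (rsmul r_u2 (embed t2)))
           (rsmul (rmul r_u2 (radd r_u r_u2)) (embed t3))
     | t1 t2 t3. t1 \<in> D1 \<and> t2 \<in> D2 \<and> t3 \<in> D3}"

definition rdot :: "nat \<Rightarrow> (nat \<Rightarrow> rr) \<Rightarrow> (nat \<Rightarrow> rr) \<Rightarrow> rr" where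
  "rdot m v d = foldr (\<lambda>i acc. radd (rmul (v i) (d i)) acc) [1..<Suc m] (0, 0, 0)"

text \<open>The code C_D for D listed in a fixed order ds = [d_1, ..., d_n].\<close>
definition code_D :: "nat \<Rightarrow> (nat \<Rightarrow> rr) list \<Rightarrow> rr list set" where
  "code_D m ds = {map (\<lambda>d. rdot m v d) ds | v. v \<in> rvecs m}"

definition gray :: "rr list \<Rightarrow> bit list" where
  "gray c = map (\<lambda>x. r_of x + s_of x) c @ map (\<lambda>x. s_of x + t_of x) c @ map t_of c"

definition gray_code :: "rr list set \<Rightarrow> bit list set" where
  "gray_code C = gray ` C"

definition binner :: "bit list \<Rightarrow> bit list \<Rightarrow> bit" where
  "binner x y = sum_list (map2 (*) x y)"

definition dual_code :: "nat \<Rightarrow> bit list set \<Rightarrow> bit list set" where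
  "dual_code N C = {y. length y = N \<and> (\<forall>x\<in>C. binner x y = 0)}"

definition self_orthogonal :: "nat \<Rightarrow> bit list set \<Rightarrow> bool" where
  "self_orthogonal N C \<longleftrightarrow> C \<subseteq> dual_code N C"

end

theory Submission
  imports Defs "HOL-Library.Product_Plus" "HOL-Library.Disjoint_Sets"
begin

(* Write the elements of D as d = (1 + u^2) t1 + u^2 t2 + u^2 (u + u^2) t3; this parametrises
   D bijectively by D1 \<times> D2 \<times> D3. Each of the three Gray coordinates of v \<cdot> d is Z_2-linear
   in d, hence of the form f1 t1 + f2 t2 + f3 t3. The inner product of the Gray images of two
   codewords is therefore a sum over D1 \<times> D2 \<times> D3 of products
   (f1 t1 + f2 t2 + f3 t3) (g1 t1 + g2 t2 + g3 t3), and every monomial of such a product misses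
   one of the three variables. It is thus counted |D_i| times for some i, which is even:
   flipping a fixed coordinate of X is a fixed-point-free involution of both Delta_X and its
   complement. *)

lemma of_nat_even_eq_0:
  assumes "(2::'r::comm_semiring_1) = 0" "even n"
  shows "(of_nat n :: 'r) = 0"
  using assms by (auto elim!: evenE)

lemma sum_pairwise_terms_over_even_product:
  fixes P :: "'a \<Rightarrow> 'b \<Rightarrow> 'r::comm_semiring_1" and Q :: "'a \<Rightarrow> 'c \<Rightarrow> 'r" and R :: "'b \<Rightarrow> 'c \<Rightarrow> 'r"
  assumes "(2::'r) = 0" "even (card A)" "even (card B)" "even (card C)"
  shows "(\<Sum>(a, b, c)\<in>A \<times> B \<times> C. P a b + Q a c + R b c) = 0"
proof -
  have [simp]: "of_nat (card A) = (0::'r)" "of_nat (card B) = (0::'r)" "of_nat (card C) = (0::'r)"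
    using assms by (simp_all add: of_nat_even_eq_0)
  have "(\<Sum>(a, b, c)\<in>A \<times> B \<times> C. P a b + Q a c + R b c)
      = (\<Sum>a\<in>A. \<Sum>b\<in>B. \<Sum>c\<in>C. P a b) + (\<Sum>a\<in>A. \<Sum>b\<in>B. \<Sum>c\<in>C. Q a c)
        + (\<Sum>a\<in>A. \<Sum>b\<in>B. \<Sum>c\<in>C. R b c)"
    by (simp add: sum.cartesian_product [symmetric] sum.distrib)
  also have "\<dots> = 0"
    by (simp add: sum.swap [of _ A B] sum_distrib_left [symmetric])
  finally show ?thesis .
qed

lemma sum_product_of_separable_forms_over_even_product:
  fixes f1 g1 :: "'a \<Rightarrow> 'r::comm_semiring_1" and f2 g2 :: "'b \<Rightarrow> 'r" and f3 g3 :: "'c \<Rightarrow> 'r"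
  assumes "(2::'r) = 0" "even (card A)" "even (card B)" "even (card C)"
  shows "(\<Sum>(a, b, c)\<in>A \<times> B \<times> C. (f1 a + f2 b + f3 c) * (g1 a + g2 b + g3 c)) = 0"
proof -
  have "(f1 a + f2 b + f3 c) * (g1 a + g2 b + g3 c)
      = (f1 a * g1 a + f1 a * g2 b + f2 b * g1 a + f2 b * g2 b)
        + (f1 a * g3 c + f3 c * g1 a + f3 c * g3 c) + (f2 b * g3 c + f3 c * g2 b)" for a b c
    by (simp add: algebra_simps)
  then show ?thesis
    using sum_pairwise_terms_over_even_product [OF assms] by simp
qed

lemma of_nat_bit_eq_0_iff: "of_nat n = (0::bit) \<longleftrightarrow> even n"
  by (induction n) auto

lemma even_card_fixpoint_free_involution:
  assumes "finite A"
    and "\<And>x. x \<in> A \<Longrightarrow> h x \<in> A" "\<And>x. x \<in> A \<Longrightarrow> h (h x) = x" "\<And>x. x \<in> A \<Longrightarrow> h x \<noteq> x"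
  shows "even (card A)"
proof -
  have "(\<Sum>x\<in>A. 1::bit) = 0"
    by (rule sum_involution_eq_0 [where h = h]) (use assms in auto)
  then show ?thesis
    by (simp add: of_nat_bit_eq_0_iff)
qed

lemma finite_bvecs: "finite (bvecs m)"
proof -
  have "finite (UNIV :: bit set)"
    by (rule finite_subset [of _ "{0, 1}"]) (use bit.exhaust in auto)
  then show ?thesis
    using finite_set_of_finite_funs [OF finite_atLeastAtMost, of UNIV 1 m 0] by (simp add: bvecs_def)
qed

lemma fun_upd_in_bvecs_iff: "i \<in> {1..m} \<Longrightarrow> v(i := b) \<in> bvecs m \<longleftrightarrow> v \<in> bvecs m"
  unfolding bvecs_def by auto

lemma even_card_Delta_or_Delta_c:
  assumes "X \<subseteq> {1..m}" "X \<noteq> {}" "D \<in> {Delta m X, Delta_c m X}"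
  shows "even (card D)"
proof -
  obtain i where "i \<in> X"
    using assms(2) by blast
  define flip where "flip v = v(i := v i + 1)" for v :: "nat \<Rightarrow> bit"
  have "flip v \<in> bvecs m \<longleftrightarrow> v \<in> bvecs m" for v
    using \<open>i \<in> X\<close> assms(1) unfolding flip_def by (intro fun_upd_in_bvecs_iff) blast
  moreover have "supp (flip v) \<subseteq> X \<longleftrightarrow> supp v \<subseteq> X" for v
    using \<open>i \<in> X\<close> by (auto simp: flip_def supp_def)
  ultimately have "v \<in> D \<Longrightarrow> flip v \<in> D" for v
    using assms(3) by (auto simp: Delta_def Delta_c_def)
  moreover have "finite D"
    using assms(3) finite_bvecs by (auto simp: Delta_def Delta_c_def)
  moreover have "flip (flip v) = v" "flip v \<noteq> v" for v
    by (auto simp: flip_def fun_eq_iff)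
  ultimately show ?thesis
    by (intro even_card_fixpoint_free_involution [of D flip]) auto
qed

lemma radd_eq_plus: "radd x y = x + y"
  by (simp add: radd_def r_of_def s_of_def t_of_def plus_prod_def)

lemma rmul_add_right: "rmul p (x + y) = rmul p x + rmul p y"
  by (simp add: rmul_def r_of_def s_of_def t_of_def algebra_simps del: add_bit_eq_xor mult_bit_eq_and)

lemma rdot_eq_sum: "rdot m v d = (\<Sum>i\<in>{1..m}. rmul (v i) (d i))"
proof -
  have "foldr (\<lambda>i acc. radd (g i) acc) xs (0, 0, 0) = (\<Sum>i\<leftarrow>xs. g i)" for g :: "nat \<Rightarrow> rr" and xs
    by (induction xs) (simp_all add: radd_eq_plus zero_prod_def)
  then show ?thesis
    unfolding rdot_def
    by (simp only: sum_list_distinct_conv_sum_set [OF distinct_upt] set_upt atLeastLessThanSuc_atLeastAtMost)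
qed

lemma rdot_rvadd: "rdot m v (rvadd d d') = rdot m v d + rdot m v d'"
  by (simp add: rdot_eq_sum rvadd_def radd_eq_plus rmul_add_right sum.distrib)

lemma r_of_add: "r_of (x + y) = r_of x + r_of y"
  and s_of_add: "s_of (x + y) = s_of x + s_of y"
  and t_of_add: "t_of (x + y) = t_of x + t_of y"
  by (simp_all add: r_of_def s_of_def t_of_def)

definition defvec :: "(nat \<Rightarrow> bit) \<Rightarrow> (nat \<Rightarrow> bit) \<Rightarrow> (nat \<Rightarrow> bit) \<Rightarrow> (nat \<Rightarrow> rr)" where
  "defvec t1 t2 t3 =
    rvadd (rvadd (rsmul (radd r_one r_u2) (embed t1)) (rsmul r_u2 (embed t2)))
          (rsmul (rmul r_u2 (radd r_u r_u2)) (embed t3))"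

lemma defset_eq_image: "defset D1 D2 D3 = (\<lambda>(t1, t2, t3). defvec t1 t2 t3) ` (D1 \<times> D2 \<times> D3)"
  unfolding defset_def defvec_def by force

lemma defvec_apply: "defvec t1 t2 t3 i = (t1 i, t3 i, t1 i + t2 i + t3 i)"
  unfolding defvec_def rvadd_def rsmul_def embed_def
  by (simp add: rmul_def radd_def r_of_def s_of_def t_of_def r_one_def r_u_def r_u2_def
      del: add_bit_eq_xor mult_bit_eq_and)

lemma inj_defvec: "inj (\<lambda>(t1, t2, t3). defvec t1 t2 t3)"
proof (rule inj_on_inverseI)
  fix p :: "(nat \<Rightarrow> bit) \<times> (nat \<Rightarrow> bit) \<times> (nat \<Rightarrow> bit)"
  show "(\<lambda>d. (\<lambda>i. fst (d i), \<lambda>i. snd (snd (d i)) - fst (d i) - fst (snd (d i)), \<lambda>i. fst (snd (d i))))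
      ((\<lambda>(t1, t2, t3). defvec t1 t2 t3) p) = p"
    by (cases p) (simp add: defvec_apply fun_eq_iff del: add_bit_eq_xor)
qed

lemma additive_rdot_defvec:
  assumes "\<And>x y. \<phi> (x + y) = \<phi> x + \<phi> y"
  shows "\<phi> (rdot m v (defvec t1 t2 t3)) =
    \<phi> (rdot m v (rsmul (radd r_one r_u2) (embed t1))) + \<phi> (rdot m v (rsmul r_u2 (embed t2)))
    + \<phi> (rdot m v (rsmul (rmul r_u2 (radd r_u r_u2)) (embed t3)))"
  unfolding defvec_def by (simp add: rdot_rvadd assms)

lemma binner_append: "length x = length y \<Longrightarrow> binner (x @ x') (y @ y') = binner x y + binner x' y'"
  by (simp add: binner_def)

lemma binner_map_map: "binner (map f xs) (map g xs) = (\<Sum>x\<leftarrow>xs. f x * g x)"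
  by (simp add: binner_def zip_map_map zip_same_conv_map comp_def del: add_bit_eq_xor mult_bit_eq_and)

lemma binner_gray_map:
  "binner (gray (map f xs)) (gray (map g xs)) =
     (\<Sum>x\<leftarrow>xs. (r_of (f x) + s_of (f x)) * (r_of (g x) + s_of (g x)))
   + (\<Sum>x\<leftarrow>xs. (s_of (f x) + t_of (f x)) * (s_of (g x) + t_of (g x)))
   + (\<Sum>x\<leftarrow>xs. t_of (f x) * t_of (g x))"
  by (simp add: gray_def binner_append binner_map_map add.assoc del: add_bit_eq_xor mult_bit_eq_and)

lemma length_gray: "length (gray c) = 3 * length c"
  by (simp add: gray_def)

lemma sum_coordinate_products_vanish:
  fixes \<phi> :: "rr \<Rightarrow> bit"
  assumes additive: "\<And>x y. \<phi> (x + y) = \<phi> x + \<phi> y"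
    and even: "even (card D1)" "even (card D2)" "even (card D3)"
    and "distinct ds" "set ds = defset D1 D2 D3"
  shows "(\<Sum>d\<leftarrow>ds. \<phi> (rdot m v d) * \<phi> (rdot m w d)) = 0"
proof -
  have "(\<Sum>d\<leftarrow>ds. \<phi> (rdot m v d) * \<phi> (rdot m w d))
      = (\<Sum>d\<in>defset D1 D2 D3. \<phi> (rdot m v d) * \<phi> (rdot m w d))"
    unfolding assms(6) [symmetric] by (rule sum_list_distinct_conv_sum_set [OF assms(5)])
  also have "\<dots> = (\<Sum>(t1, t2, t3)\<in>D1 \<times> D2 \<times> D3.
      \<phi> (rdot m v (defvec t1 t2 t3)) * \<phi> (rdot m w (defvec t1 t2 t3)))"
    unfolding defset_eq_image sum.reindex [OF inj_on_subset [OF inj_defvec subset_UNIV]]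
    by (simp add: comp_def split_def)
  also have "\<dots> = 0"
    unfolding additive_rdot_defvec [of \<phi>, OF additive]
    by (rule sum_product_of_separable_forms_over_even_product) (simp_all add: even)
  finally show ?thesis .
qed

theorem proposition4p3:
  fixes m :: nat and L M N :: "nat set"
    and D1 D2 D3 :: "(nat \<Rightarrow> bit) set" and ds :: "(nat \<Rightarrow> rr) list"
  assumes "L \<subseteq> {1..m}" "L \<noteq> {}"
      and "M \<subseteq> {1..m}" "M \<noteq> {}"
      and "N \<subseteq> {1..m}" "N \<noteq> {}"
      and "D1 \<in> {Delta m L, Delta_c m L}"
      and "D2 \<in> {Delta m M, Delta_c m M}"
      and "D3 \<in> {Delta m N, Delta_c m N}"
      and "distinct ds" "set ds = defset D1 D2 D3"
  shows "self_orthogonal (3 * length ds) (gray_code (code_D m ds))"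
proof -
  have even: "even (card D1)" "even (card D2)" "even (card D3)"
    using even_card_Delta_or_Delta_c assms(1-9) by blast+
  note vanish = sum_coordinate_products_vanish [OF _ even assms(10,11)]
  have "binner (gray (map (rdot m v) ds)) (gray (map (rdot m w) ds)) = 0" for v w
    unfolding binner_gray_map
    using vanish [of "\<lambda>x. r_of x + s_of x"] vanish [of "\<lambda>x. s_of x + t_of x"] vanish [of t_of]
    by (simp add: r_of_add s_of_add t_of_add algebra_simps del: add_bit_eq_xor mult_bit_eq_and)
  then show ?thesis
    unfolding self_orthogonal_def dual_code_def gray_code_def code_D_def by (auto simp: length_gray)
qed

end
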